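(* Let $\mu>1$, $\gamma=\mu\gamma_1^N$, $0<\alpha<1/4$, $\rho_k=4k^\alpha$. Define, for $z\in\widehat{\mathbb{R}}^N$, $$R(z)=\widetilde G_N(z)+\tfrac14-(z_0+1)^2-\tfrac12\sum_{k=1}^{N-1}\nu_{k,N}|z_k|^2.$$ There exist constants $A_9<\infty$ and $\delta_0>0$ such that for all $N\ge3$, all $0<\delta<\delta_0$ and all $z\in C_\delta(I_-)$, $|R(z)|\le A_9\delta^3$, where $C_\delta(I_-)=\{z\in\widehat{\mathbb{R}}^N:|z_0+1|\le\delta/\sqrt2,\ |z_k|\le\delta r_{k,N}/\sqrt{\nu_{k,N}}\ \text{for }1\le k\le N-1\}$.
   Context: Indices modulo $N$; $F_{\gamma,N}(x)=\sum_{i=0}^{N-1}(\tfrac14x_i^4-\tfrac12x_i^2)+\tfrac\gamma4\sum_{i=0}^{N-1}(x_i-x_{i+1})^2$; $\gamma_1^N=\frac1{2\sin^2(\pi/N)}$; $G_N=N^{-1}F_{\gamma,N}$; $\lambda_{k,N}=-1+2\gamma\sin^2(k\pi/N)$ and $\nu_{k,N}=\lambda_{k,N}+3$ (eigenvalues of $\nabla^2F_{\gamma,N}$ at $I_\pm=\pm(1,\dots,1)$; $\nu_{0,N}=2$). $\omega=e^{2\pi i/N}$; $\widehat{\mathbb{R}}^N=\{z\in\mathbb{C}^N:z_k=\overline{z_{N-k}}\}$; $x_j(Nz)=\sum_k\omega^{jk}z_k$; $\widetilde G_N(z)=G_N(x(Nz))$; in these coordinates $I_-$ corresponds to $z=(-1,0,\dots,0)$.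 $r_{k,N}=r_{N-k,N}=\rho_k$ for $1\le k\le\lfloor N/2\rfloor$. *)

theory Defs
  imports "HOL-Analysis.Analysis"
begin

text \<open>Vectors in R^N / C^N are represented as functions on nat, indices 0..N-1
  (indices taken modulo N).\<close>

definition F_gN :: "real \<Rightarrow> nat \<Rightarrow> (nat \<Rightarrow> real) \<Rightarrow> real" where
  "F_gN \<gamma> N x = (\<Sum>i<N. (1/4) * x i ^ 4 - (1/2) * x i ^ 2)
      + \<gamma> / 4 * (\<Sum>i<N. (x i - x ((i + 1) mod N)) ^ 2)"

definition gamma1 :: "nat \<Rightarrow> real" where
  "gamma1 N = 1 / (2 * sin (pi / real N) ^ 2)"

definition G_N :: "real \<Rightarrow> nat \<Rightarrow> (nat \<Rightarrow> real) \<Rightarrow> real" where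
  "G_N \<gamma> N x = F_gN \<gamma> N x / real N"

definition lam :: "real \<Rightarrow> nat \<Rightarrow> nat \<Rightarrow> real" where
  "lam \<gamma> N k = -1 + 2 * \<gamma> * sin (real k * pi / real N) ^ 2"

definition nu :: "real \<Rightarrow> nat \<Rightarrow> nat \<Rightarrow> real" where
  "nu \<gamma> N k = lam \<gamma> N k + 3"

definition omega :: "nat \<Rightarrow> complex" where
  "omega N = cis (2 * pi / real N)"

text \<open>The space hat-R^N of conjugate-symmetric complex vectors (entries beyond N-1 set to 0).\<close>
definition hatR :: "nat \<Rightarrow> (nat \<Rightarrow> complex) set" where
  "hatR N = {z. (\<forall>k<N. z k = cnj (z ((N - k) mod N))) \<and> (\<forall>k\<ge>N. z k = 0)}"

text \<open>x_j(Nz) = sum_k omega^{jk} z_k (real for z in hat-R^N; we take the real part).\<close>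
definition xvec :: "nat \<Rightarrow> (nat \<Rightarrow> complex) \<Rightarrow> nat \<Rightarrow> real" where
  "xvec N z j = Re (\<Sum>k<N. omega N ^ (j * k) * z k)"

definition Gtilde :: "real \<Rightarrow> nat \<Rightarrow> (nat \<Rightarrow> complex) \<Rightarrow> real" where
  "Gtilde \<gamma> N z = G_N \<gamma> N (xvec N z)"

definition rho :: "real \<Rightarrow> nat \<Rightarrow> real" where
  "rho \<alpha> k = 4 * real k powr \<alpha>"

definition r_kN :: "real \<Rightarrow> nat \<Rightarrow> nat \<Rightarrow> real" where
  "r_kN \<alpha> N k = rho \<alpha> (min k (N - k))"

definition Rrem :: "real \<Rightarrow> nat \<Rightarrow> (nat \<Rightarrow> complex) \<Rightarrow> real" where
  "Rrem \<gamma> N z = Gtilde \<gamma> N z + 1/4 - (Re (z 0) + 1) ^ 2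
      - (1/2) * (\<Sum>k\<in>{1..N-1}. nu \<gamma> N k * (cmod (z k)) ^ 2)"

definition C_delta :: "real \<Rightarrow> real \<Rightarrow> nat \<Rightarrow> real \<Rightarrow> (nat \<Rightarrow> complex) set" where
  "C_delta \<gamma> \<alpha> N \<delta> = {z \<in> hatR N. cmod (z 0 + 1) \<le> \<delta> / sqrt 2 \<and>
      (\<forall>k\<in>{1..N-1}. cmod (z k) \<le> \<delta> * r_kN \<alpha> N k / sqrt (nu \<gamma> N k))}"

end

theory Submission
  imports Defs
begin

(* Shift the coordinates to w = z + e_0 (so that I_- becomes w = 0) and let
   y_j = sum_k omega^(jk) w_k be the discrete Fourier transform of w; for
   conjugate-symmetric w it is real and x_j = y_j - 1.  Writing F in these
   variables, Parseval's identity identifies the quadratic part exactly with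
   (z_0+1)^2 + 1/2 sum nu_k |z_k|^2, so that R(z) = (1/N) sum_j (y_j^4/4 - y_j^3).
   The cubic term is absorbed by AM-GM, |y|^3 <= (delta y^2 + y^4/delta)/2, and
   the two moments are computed by Parseval: sum y^2 = N ||w||_2^2 and, since
   y^2 is the transform of the cyclic autoconvolution w*w, sum y^4 = N ||w*w||_2^2
   <= N ||w||_{4/3}^4 (a Young-type inequality proved with Cauchy-Schwarz).
   Finally nu_k >= min(k,N-k)^2/4 gives |w_k| <= 8 delta min(k,N-k)^(alpha-1) on
   C_delta, so ||w||_p^p <= C delta^p uniformly in N whenever p(1-alpha) > 1;
   this is used with p = 2 and p = 4/3 (here alpha < 1/4 is needed). *)

section \<open>Roots of unity\<close>

lemma omega_pow: "omega N ^ n = cis (2 * pi * real n / real N)"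
  unfolding omega_def by (simp add: Complex.DeMoivre algebra_simps)

lemma omega_pow_N: "N > 0 \<Longrightarrow> omega N ^ N = 1"
  by (simp add: omega_pow)

lemma omega_pow_mod:
  assumes "N > 0" shows "omega N ^ a = omega N ^ (a mod N)"
proof -
  have "a = N * (a div N) + a mod N" by simp
  then have "omega N ^ a = (omega N ^ N) ^ (a div N) * omega N ^ (a mod N)"
    by (metis power_add power_mult)
  then show ?thesis using omega_pow_N[OF assms] by simp
qed

lemma omega_pow_cong:
  assumes "N > 0" "a mod N = b mod N" shows "omega N ^ a = omega N ^ b"
  using omega_pow_mod[OF assms(1), of a] omega_pow_mod[OF assms(1), of b] assms(2) by simp

lemma omega_pow_dvd:
  assumes "N > 0" "N dvd a" shows "omega N ^ a = 1"
  using omega_pow_mod[OF assms(1), of a] assms(2) by simp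

lemma norm_omega_pow [simp]: "cmod (omega N ^ n) = 1"
  by (simp add: omega_pow)

lemma cnj_omega_mult: "cnj (omega N ^ a) * omega N ^ a = 1"
  by (metis complex_norm_square mult.commute norm_omega_pow of_real_1 power_one)

lemma omega_pow_ne_1:
  assumes "0 < m" "m < N" shows "omega N ^ m \<noteq> 1"
proof
  assume "omega N ^ m = 1"
  then have "cos (2 * pi * real m / real N) = 1"
    by (simp add: omega_pow cis.ctr complex_eq_iff)
  then obtain n :: int where n: "2 * pi * real m / real N = real_of_int n * 2 * pi"
    using cos_one_2pi_int by blast
  have N0: "real N > 0" using assms by simp
  from n have "pi * (2 * real m) = pi * (2 * (real_of_int n * real N))"
    using N0 by (simp add: field_simps)
  then have "real m / real N = real_of_int n" using N0 by simp
  moreover have "0 < real m / real N" "real m / real N < 1" using assms by auto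
  ultimately have "0 < real_of_int n" "real_of_int n < 1" by auto
  then have "0 < n" "n < 1" by linarith+
  then show False by simp
qed

lemma omega_pow_inj:
  assumes "k < N" "l < N" "omega N ^ k = omega N ^ l" shows "k = l"
proof -
  have unit: "omega N ^ n \<noteq> 0" for n by (metis norm_omega_pow norm_zero zero_neq_one)
  have root: "omega N ^ (b - a) = 1" if "a \<le> b" "omega N ^ a = omega N ^ b" for a b
  proof -
    have "omega N ^ (b - a) * omega N ^ a = omega N ^ a"
      using that by (metis le_add_diff_inverse2 power_add)
    then show ?thesis using unit[of a] by (metis mult_cancel_right2)
  qed
  show ?thesis
  proof (rule ccontr)
    assume "k \<noteq> l"
    then consider "k < l" | "l < k" by linarith
    then show False
    proof cases
      case 1
      then show False using root[of k l] omega_pow_ne_1[of "l - k" N] assms by simp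
    next
      case 2
      then show False using root[of l k] omega_pow_ne_1[of "k - l" N] assms by simp
    qed
  qed
qed

lemma cnj_omega_reflect:
  assumes "k < N"
  shows "cnj (omega N ^ (j * k)) = omega N ^ (j * ((N - k) mod N))"
proof -
  have "N dvd (j * k + j * ((N - k) mod N))"
    using assms by (cases "k = 0") (auto simp flip: add_mult_distrib2)
  then have "omega N ^ (j * k) * omega N ^ (j * ((N - k) mod N)) = 1"
    using omega_pow_dvd[of N] assms by (simp flip: power_add)
  then have "cnj (omega N ^ (j * k))
      = cnj (omega N ^ (j * k)) * (omega N ^ (j * k) * omega N ^ (j * ((N - k) mod N)))"
    by simp
  also have "\<dots> = omega N ^ (j * ((N - k) mod N))"
    using cnj_omega_mult[of N "j * k"] by (simp add: mult.assoc[symmetric])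
  finally show ?thesis .
qed

text \<open>The symbol of the discrete gradient: \<open>|1 - \<omega>\<^sup>k|\<^sup>2 = 4 sin\<^sup>2(k\<pi>/N)\<close>.\<close>
lemma norm_1_minus_omega_pow:
  "(cmod (1 - omega N ^ k))\<^sup>2 = 4 * (sin (real k * pi / real N))\<^sup>2"
proof -
  let ?t = "real k * pi / real N"
  have "omega N ^ k = cis (2 * ?t)" by (simp add: omega_pow algebra_simps)
  then have "(cmod (1 - omega N ^ k))\<^sup>2 = (1 - cos (2 * ?t))\<^sup>2 + (sin (2 * ?t))\<^sup>2"
    by (simp add: cmod_power2)
  also have "\<dots> = 2 - 2 * cos (2 * ?t)"
    using sin_cos_squared_add[of "2 * ?t"] by (simp add: power2_eq_square algebra_simps)
  also have "\<dots> = 4 * (sin ?t)\<^sup>2" by (simp only: cos_double_sin) simp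
  finally show ?thesis .
qed

lemma sum_cyclic_shift:
  fixes k N :: nat assumes "k < N"
  shows "(\<Sum>m<N. f ((m + N - k) mod N)) = (\<Sum>l<N. f l)"
proof (rule sum.reindex_bij_witness[where i="\<lambda>l. (l + k) mod N" and j="\<lambda>m. (m + N - k) mod N"])
  fix a assume a: "a \<in> {..<N}"
  have "((a + N - k) mod N + k) mod N = (a + N - k + k) mod N" by (metis mod_add_left_eq)
  also have "a + N - k + k = a + N" using assms by simp
  finally show "((a + N - k) mod N + k) mod N = a" using a by simp
  show "(a + N - k) mod N \<in> {..<N}" using assms by simp
next
  fix b assume b: "b \<in> {..<N}"
  have "((b + k) mod N + N - k) mod N = ((b + k) mod N + (N - k)) mod N" using assms by simp
  also have "\<dots> = (b + k + (N - k)) mod N" by (metis mod_add_left_eq)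
  also have "b + k + (N - k) = b + N" using assms by simp
  finally show "((b + k) mod N + N - k) mod N = b" using b by simp
  show "(b + k) mod N \<in> {..<N}" using assms by simp
qed simp

lemma reflect_reflect_idx:
  fixes k N :: nat assumes "k < N" shows "(N - (N - k) mod N) mod N = k"
proof (cases "k = 0")
  case False
  then have "(N - k) mod N = N - k" using assms by simp
  then show ?thesis using assms False by simp
qed simp

lemma sum_cyclic_reflect:
  fixes N :: nat shows "(\<Sum>k<N. f ((N - k) mod N)) = (\<Sum>l<N. f l)"
proof (rule sum.reindex_bij_witness[where i="\<lambda>l. (N - l) mod N" and j="\<lambda>m. (N - m) mod N"])
  fix a assume "a \<in> {..<N}" then show "(N - (N - a) mod N) mod N = a"
    by (simp add: reflect_reflect_idx)
next
  fix b assume "b \<in> {..<N}" then show "(N - (N - b) mod N) mod N = b"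
    by (simp add: reflect_reflect_idx)
qed (auto intro!: mod_less_divisor)

lemma reflect_shift_idx:
  fixes m N k :: nat assumes "m < N" "k < N"
  shows "(m + N - (m + N - k) mod N) mod N = k"
proof (cases "k \<le> m")
  case True
  have e1: "m + N - k = (m - k) + N" using True by simp
  have "((m - k) + N) mod N = m - k" using assms by simp
  then have e2: "(m + N - k) mod N = m - k" by (simp only: e1)
  have e3: "m + N - (m - k) = k + N" using True assms by simp
  show ?thesis using assms by (simp only: e2 e3 mod_add_self2 mod_less)
next
  case False
  then have "(m + N - k) mod N = m + N - k" using assms by simp
  then show ?thesis using assms False by simp
qed

lemma sum_cyclic_reflect_shift:
  fixes m N :: nat assumes "m < N"
  shows "(\<Sum>k<N. f ((m + N - k) mod N)) = (\<Sum>l<N. f l)"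
proof (rule sum.reindex_bij_witness[where i="\<lambda>l. (m + N - l) mod N" and j="\<lambda>l. (m + N - l) mod N"])
  fix a assume "a \<in> {..<N}" then show "(m + N - (m + N - a) mod N) mod N = a"
    using reflect_shift_idx assms by simp
next
  fix b assume "b \<in> {..<N}" then show "(m + N - (m + N - b) mod N) mod N = b"
    using reflect_shift_idx assms by simp
qed (use assms in auto)

lemma sum_lessThan_split_zero:
  fixes f :: "nat \<Rightarrow> 'a::comm_monoid_add" assumes "N > 0"
  shows "(\<Sum>k<N. f k) = f 0 + (\<Sum>k\<in>{1..N-1}. f k)"
proof -
  have "{..<N} = insert 0 {1..N-1}" using assms by auto
  then show ?thesis by simp
qed

section \<open>The discrete Fourier transform\<close>

text \<open>The (unnormalised) transform \<open>y\<^sub>j = \<Sum>\<^sub>k \<omega>\<^sup>j\<^sup>k w\<^sub>k\<close>; \<open>xvec N z\<close> is its real part.\<close>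
definition dft :: "nat \<Rightarrow> (nat \<Rightarrow> complex) \<Rightarrow> nat \<Rightarrow> complex" where
  "dft N w j = (\<Sum>k<N. omega N ^ (j * k) * w k)"

definition autoconv :: "nat \<Rightarrow> (nat \<Rightarrow> complex) \<Rightarrow> nat \<Rightarrow> complex" where
  "autoconv N w m = (\<Sum>k<N. w k * w ((m + N - k) mod N))"

definition conj_symmetric :: "nat \<Rightarrow> (nat \<Rightarrow> complex) \<Rightarrow> bool" where
  "conj_symmetric N w \<longleftrightarrow> (\<forall>k<N. w k = cnj (w ((N - k) mod N)))"

lemma omega_orthogonality:
  assumes "k < N" "l < N"
  shows "(\<Sum>j<N. omega N ^ (j * k) * cnj (omega N ^ (j * l))) = (if k = l then of_nat N else 0)"
proof -
  define q where "q = omega N ^ k * cnj (omega N ^ l)"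
  have "omega N ^ (j * k) * cnj (omega N ^ (j * l)) = q ^ j" for j
    unfolding q_def by (simp add: power_mult_distrib mult.commute[of j] power_mult)
  then have geometric: "(\<Sum>j<N. omega N ^ (j * k) * cnj (omega N ^ (j * l))) = (\<Sum>j<N. q ^ j)"
    by simp
  show ?thesis
  proof (cases "k = l")
    case True
    then have "q = 1" unfolding q_def using cnj_omega_mult[of N l] by (simp add: mult.commute)
    then show ?thesis using True geometric by simp
  next
    case False
    have "q \<noteq> 1"
    proof
      assume "q = 1"
      then have "omega N ^ k * (cnj (omega N ^ l) * omega N ^ l) = omega N ^ l"
        unfolding q_def by (metis mult.assoc mult_1)
      then have "omega N ^ k = omega N ^ l" by (simp only: cnj_omega_mult mult_1_right)
      then show False using omega_pow_inj assms False by blast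
    qed
    moreover have "q ^ N = (omega N ^ N) ^ k * cnj ((omega N ^ N) ^ l)"
      unfolding q_def by (simp add: power_mult_distrib flip: power_mult) (simp add: mult.commute)
    then have "q ^ N = 1" using omega_pow_N[of N] assms by simp
    ultimately show ?thesis using False geometric by (simp add: geometric_sum)
  qed
qed

lemma dft_parseval:
  "(\<Sum>j<N. (cmod (dft N c j))\<^sup>2) = real N * (\<Sum>k<N. (cmod (c k))\<^sup>2)"
proof -
  have "complex_of_real (\<Sum>j<N. (cmod (dft N c j))\<^sup>2)
      = (\<Sum>j<N. \<Sum>l<N. \<Sum>k<N. c k * cnj (c l) * (omega N ^ (j * k) * cnj (omega N ^ (j * l))))"
    unfolding dft_def of_real_sum complex_norm_square
    by (simp add: sum_distrib_left sum_distrib_right algebra_simps)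
  also have "\<dots> = (\<Sum>l<N. \<Sum>j<N. \<Sum>k<N. c k * cnj (c l) * (omega N ^ (j * k) * cnj (omega N ^ (j * l))))"
    by (rule sum.swap)
  also have "\<dots> = (\<Sum>l<N. \<Sum>k<N. \<Sum>j<N. c k * cnj (c l) * (omega N ^ (j * k) * cnj (omega N ^ (j * l))))"
    by (rule sum.cong[OF refl], rule sum.swap)
  also have "\<dots> = (\<Sum>k<N. \<Sum>l<N. c k * cnj (c l) * (\<Sum>j<N. omega N ^ (j * k) * cnj (omega N ^ (j * l))))"
    by (subst sum.swap) (simp only: sum_distrib_left)
  also have "\<dots> = (\<Sum>k<N. \<Sum>l<N. c k * cnj (c l) * (if k = l then of_nat N else 0))"
    by (intro sum.cong refl, subst omega_orthogonality, auto)
  also have "\<dots> = (\<Sum>k<N. c k * cnj (c k) * of_nat N)"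
    by (simp add: if_distrib cong: if_cong)
  also have "\<dots> = complex_of_real (real N * (\<Sum>k<N. (cmod (c k))\<^sup>2))"
    by (simp only: of_real_mult of_real_sum complex_norm_square sum_distrib_left
        of_real_of_nat_eq mult.commute)
  finally show ?thesis using of_real_eq_iff by blast
qed

lemma dft_real:
  assumes "conj_symmetric N w" shows "Im (dft N w j) = 0"
proof -
  have "cnj (dft N w j) = (\<Sum>k<N. omega N ^ (j * ((N - k) mod N)) * w ((N - k) mod N))"
    unfolding dft_def cnj_sum
  proof (rule sum.cong[OF refl])
    fix k assume k: "k \<in> {..<N}"
    then have "cnj (w k) = w ((N - k) mod N)"
      using assms reflect_reflect_idx[of k N] unfolding conj_symmetric_def
      by (metis complex_cnj_cnj lessThan_iff)
    then show "cnj (omega N ^ (j * k) * w k) = omega N ^ (j * ((N - k) mod N)) * w ((N - k) mod N)"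
      using cnj_omega_reflect[of k N j] k by simp
  qed
  also have "\<dots> = dft N w j"
    unfolding dft_def by (rule sum_cyclic_reflect[where f="\<lambda>l. omega N ^ (j * l) * w l"])
  finally show ?thesis using Reals_cnj_iff complex_is_Real_iff by blast
qed

lemma dft_square:
  assumes "N > 0" shows "(dft N w j)\<^sup>2 = dft N (autoconv N w) j"
proof -
  have inner: "(\<Sum>l<N. (omega N ^ (j * k) * w k) * (omega N ^ (j * l) * w l))
      = (\<Sum>m<N. omega N ^ (j * m) * (w k * w ((m + N - k) mod N)))" if k: "k < N" for k
  proof -
    have "omega N ^ (j * k + j * ((m + N - k) mod N)) = omega N ^ (j * m)" for m
    proof (rule omega_pow_cong[OF assms])
      have "(j * k + j * ((m + N - k) mod N)) mod N = (j * k + j * (m + N - k)) mod N"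
        by (metis mod_add_right_eq mod_mult_right_eq)
      also have "j * k + j * (m + N - k) = j * m + j * N"
        using k by (simp flip: add_mult_distrib2 diff_mult_distrib2)
      finally show "(j * k + j * ((m + N - k) mod N)) mod N = (j * m) mod N" by simp
    qed
    then show ?thesis
      using sum_cyclic_shift[OF k, of "\<lambda>l. (omega N ^ (j * k) * w k) * (omega N ^ (j * l) * w l)"]
      by (simp add: power_add algebra_simps)
  qed
  have "(dft N w j)\<^sup>2 = (\<Sum>k<N. \<Sum>l<N. (omega N ^ (j * k) * w k) * (omega N ^ (j * l) * w l))"
    unfolding dft_def by (simp add: power2_eq_square sum_product)
  also have "\<dots> = (\<Sum>k<N. \<Sum>m<N. omega N ^ (j * m) * (w k * w ((m + N - k) mod N)))"
    using inner by simp
  also have "\<dots> = dft N (autoconv N w) j"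
    unfolding dft_def autoconv_def by (subst sum.swap) (simp add: sum_distrib_left)
  finally show ?thesis .
qed

lemma dft_difference:
  assumes "N > 0"
  shows "dft N w j - dft N w ((j + 1) mod N) = dft N (\<lambda>k. (1 - omega N ^ k) * w k) j"
proof -
  have "omega N ^ (((j + 1) mod N) * k) = omega N ^ (j * k) * omega N ^ k" for k
  proof -
    have "omega N ^ (((j + 1) mod N) * k) = omega N ^ ((j + 1) * k)"
      by (rule omega_pow_cong[OF assms]) (simp add: mod_mult_left_eq)
    then show ?thesis by (simp add: algebra_simps power_add)
  qed
  then have "omega N ^ (j * k) * w k - omega N ^ (((j + 1) mod N) * k) * w k
      = omega N ^ (j * k) * ((1 - omega N ^ k) * w k)" for k
    by (simp add: algebra_simps)
  then show ?thesis
    unfolding dft_def by (simp only: sum_subtractf[symmetric])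
qed

section \<open>A Young-type inequality for the autoconvolution\<close>

text \<open>The discrete analogue of \<open>\<parallel>f * f\<parallel>\<^sub>2 \<le> \<parallel>f\<parallel>\<^sub>4\<^sub>/\<^sub>3\<^sup>2\<close>, written for \<open>t = |w|\<^sup>1\<^sup>/\<^sup>3\<close>:
  two applications of Cauchy-Schwarz for each output index.\<close>
lemma cyclic_young:
  fixes t :: "nat \<Rightarrow> real" assumes t0: "\<And>k. t k \<ge> 0"
  shows "(\<Sum>m<N. (\<Sum>k<N. t k ^ 3 * t ((m + N - k) mod N) ^ 3)\<^sup>2) \<le> (\<Sum>k<N. t k ^ 4) ^ 3"
proof -
  define T where "T = (\<Sum>k<N. t k ^ 4)"
  have sq4: "(x\<^sup>2)\<^sup>2 = x ^ 4" for x :: real by (simp flip: power_mult)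
  have T0: "T \<ge> 0" unfolding T_def using t0 by (simp add: sum_nonneg)
  have per_index: "(\<Sum>k<N. t k ^ 3 * t ((m + N - k) mod N) ^ 3)\<^sup>2
      \<le> T * (\<Sum>k<N. t k ^ 4 * t ((m + N - k) mod N) ^ 4)" if m: "m < N" for m
  proof -
    define s where "s k = t ((m + N - k) mod N)" for k
    have s0: "s k \<ge> 0" for k unfolding s_def using t0 by simp
    have sT: "(\<Sum>k<N. s k ^ 4) = T"
      unfolding s_def T_def using sum_cyclic_reflect_shift[OF m, of "\<lambda>l. t l ^ 4"] by simp
    have "(\<Sum>k<N. t k ^ 2 * s k ^ 2)\<^sup>2 \<le> (\<Sum>k<N. (t k ^ 2)\<^sup>2) * (\<Sum>k<N. (s k ^ 2)\<^sup>2)"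
      by (rule Cauchy_Schwarz_ineq_sum)
    also have "\<dots> = T * T" by (simp only: sq4 sT flip: T_def)
    also have "\<dots> = T\<^sup>2" by (simp add: power2_eq_square)
    finally have mixed: "(\<Sum>k<N. t k ^ 2 * s k ^ 2) \<le> T" using T0 by (rule power2_le_imp_le)
    have "(\<Sum>k<N. t k ^ 3 * s k ^ 3)\<^sup>2 = (\<Sum>k<N. (t k ^ 2 * s k ^ 2) * (t k * s k))\<^sup>2"
      by (simp add: power2_eq_square power3_eq_cube algebra_simps)
    also have "\<dots> \<le> (\<Sum>k<N. (t k ^ 2 * s k ^ 2)\<^sup>2) * (\<Sum>k<N. (t k * s k)\<^sup>2)"
      by (rule Cauchy_Schwarz_ineq_sum)
    also have "\<dots> = (\<Sum>k<N. t k ^ 4 * s k ^ 4) * (\<Sum>k<N. t k ^ 2 * s k ^ 2)"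
      by (simp only: power_mult_distrib sq4)
    also have "\<dots> \<le> (\<Sum>k<N. t k ^ 4 * s k ^ 4) * T"
      using mixed t0 s0 by (intro mult_left_mono sum_nonneg) auto
    finally show ?thesis unfolding s_def by (simp add: mult.commute)
  qed
  have shifted: "(\<Sum>m<N. t ((m + N - k) mod N) ^ 4) = T" if "k < N" for k
    using sum_cyclic_shift[of k N "\<lambda>l. t l ^ 4"] that unfolding T_def by simp
  have "(\<Sum>m<N. (\<Sum>k<N. t k ^ 3 * t ((m + N - k) mod N) ^ 3)\<^sup>2)
      \<le> (\<Sum>m<N. T * (\<Sum>k<N. t k ^ 4 * t ((m + N - k) mod N) ^ 4))"
    by (intro sum_mono per_index) simp
  also have "\<dots> = T * (\<Sum>k<N. t k ^ 4 * (\<Sum>m<N. t ((m + N - k) mod N) ^ 4))"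
    by (simp only: sum_distrib_left, subst sum.swap) (rule refl)
  also have "\<dots> = T * (\<Sum>k<N. t k ^ 4 * T)"
    using shifted by simp
  also have "\<dots> = T ^ 3"
    by (simp only: sum_distrib_right[symmetric] T_def[symmetric]) (simp add: power3_eq_cube)
  finally show ?thesis unfolding T_def .
qed

lemma autoconv_norm_bound:
  "(\<Sum>m<N. (cmod (autoconv N w m))\<^sup>2) \<le> (\<Sum>k<N. cmod (w k) powr (4/3)) ^ 3"
proof -
  define t where "t k = cmod (w k) powr (1/3)" for k
  have t3: "t k ^ 3 = cmod (w k)" and t4: "t k ^ 4 = cmod (w k) powr (4/3)" for k
    unfolding t_def by (cases "w k = 0"; simp add: powr_power)+
  have "cmod (autoconv N w m) \<le> (\<Sum>k<N. t k ^ 3 * t ((m + N - k) mod N) ^ 3)" for m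
  proof -
    have "cmod (autoconv N w m) \<le> (\<Sum>k<N. cmod (w k * w ((m + N - k) mod N)))"
      unfolding autoconv_def by (rule norm_sum)
    then show ?thesis by (simp add: t3 norm_mult)
  qed
  then have "(\<Sum>m<N. (cmod (autoconv N w m))\<^sup>2)
      \<le> (\<Sum>m<N. (\<Sum>k<N. t k ^ 3 * t ((m + N - k) mod N) ^ 3)\<^sup>2)"
    by (intro sum_mono power_mono) auto
  also have "\<dots> \<le> (\<Sum>k<N. t k ^ 4) ^ 3" by (rule cyclic_young) (simp add: t_def)
  finally show ?thesis by (simp add: t4)
qed

section \<open>The remainder in Fourier coordinates\<close>

lemma real_dft_moments:
  assumes "N > 0" "conj_symmetric N w"
  shows "(\<Sum>j<N. (Re (dft N w j))\<^sup>2) = real N * (\<Sum>k<N. (cmod (w k))\<^sup>2)"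
    and "(\<Sum>j<N. (Re (dft N w j)) ^ 4) = real N * (\<Sum>m<N. (cmod (autoconv N w m))\<^sup>2)"
proof -
  have re: "dft N w j = complex_of_real (Re (dft N w j))" for j
    using dft_real[OF assms(2)] by (simp add: complex_eq_iff)
  show "(\<Sum>j<N. (Re (dft N w j))\<^sup>2) = real N * (\<Sum>k<N. (cmod (w k))\<^sup>2)"
    using dft_parseval[of N w] by (subst (asm) re) simp
  have "dft N (autoconv N w) j = complex_of_real ((Re (dft N w j))\<^sup>2)" for j
    by (subst dft_square[OF assms(1), symmetric], subst re) simp
  then have "(Re (dft N w j)) ^ 4 = (cmod (dft N (autoconv N w) j))\<^sup>2" for j
    by (simp add: norm_power flip: power_mult)
  then show "(\<Sum>j<N. (Re (dft N w j)) ^ 4) = real N * (\<Sum>m<N. (cmod (autoconv N w m))\<^sup>2)"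
    using dft_parseval[of N "autoconv N w"] by simp
qed

text \<open>Half the Hessian quadratic form of \<open>F_{\<gamma>,N}/N\<close> at \<open>I\<^sub>-\<close>, in Fourier coordinates:
  the mode \<open>k\<close> carries the weight \<open>\<nu>\<^sub>k/2 = 1 + \<gamma> sin\<^sup>2(k\<pi>/N)\<close>.\<close>
definition hessian_form :: "real \<Rightarrow> nat \<Rightarrow> (nat \<Rightarrow> complex) \<Rightarrow> real" where
  "hessian_form \<gamma> N w = (\<Sum>k<N. (1 + \<gamma> * (sin (real k * pi / real N))\<^sup>2) * (cmod (w k))\<^sup>2)"

lemma F_gN_fourier:
  assumes N0: "N > 0" and sym: "conj_symmetric N w"
  defines "y \<equiv> \<lambda>j. Re (dft N w j)"
  shows "F_gN \<gamma> N (\<lambda>j. y j - 1)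
    = (\<Sum>j<N. y j ^ 4 / 4 - y j ^ 3) + real N * (hessian_form \<gamma> N w - 1/4)"
proof -
  define D where "D = (\<Sum>j<N. (y j - y ((j + 1) mod N))\<^sup>2)"
  define W where "W = (\<Sum>k<N. (cmod (w k))\<^sup>2)"
  define S where "S = (\<Sum>k<N. (sin (real k * pi / real N))\<^sup>2 * (cmod (w k))\<^sup>2)"
  have re: "dft N w j = complex_of_real (y j)" for j
    using dft_real[OF sym] unfolding y_def by (simp add: complex_eq_iff)
  have squares: "(\<Sum>j<N. (y j)\<^sup>2) = real N * W"
    unfolding y_def W_def by (rule real_dft_moments(1)[OF N0 sym])
  have differences: "D = real N * (4 * S)"
  proof -
    have "D = (\<Sum>j<N. (cmod (dft N (\<lambda>k. (1 - omega N ^ k) * w k) j))\<^sup>2)"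
      unfolding D_def by (simp add: dft_difference[OF N0, symmetric] re flip: of_real_diff)
    also have "\<dots> = real N * (4 * S)"
      unfolding S_def
      by (simp add: dft_parseval norm_mult power_mult_distrib norm_1_minus_omega_pow
          sum_distrib_left mult.assoc)
    finally show ?thesis .
  qed
  have hessian: "hessian_form \<gamma> N w = W + \<gamma> * S"
    unfolding hessian_form_def W_def S_def by (simp add: algebra_simps sum.distrib sum_distrib_left)
  have potential: "1/4 * (t - 1) ^ 4 - 1/2 * (t - 1)\<^sup>2 = (t ^ 4 / 4 - t ^ 3) + t\<^sup>2 - 1/4" for t :: real
    by (simp add: power2_eq_square power3_eq_cube power4_eq_xxxx field_simps)
  have shift: "a - 1 - (b - 1) = a - b" for a b :: real by simp
  have "F_gN \<gamma> N (\<lambda>j. y j - 1) = (\<Sum>j<N. (y j ^ 4 / 4 - y j ^ 3) + (y j)\<^sup>2 - 1/4) + \<gamma> / 4 * D"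
    unfolding F_gN_def D_def potential shift ..
  also have "\<dots> = (\<Sum>j<N. y j ^ 4 / 4 - y j ^ 3) + real N * W - real N / 4 + \<gamma> / 4 * D"
    by (simp add: sum.distrib sum_subtractf squares)
  finally show ?thesis
    unfolding hessian differences by (simp add: algebra_simps)
qed

lemma Rrem_fourier:
  assumes N0: "N > 0" and zh: "z \<in> hatR N"
  defines "w \<equiv> \<lambda>k. z k + (if k = 0 then 1 else 0)"
  shows "conj_symmetric N w"
    and "Rrem \<gamma> N z = (\<Sum>j<N. Re (dft N w j) ^ 4 / 4 - Re (dft N w j) ^ 3) / real N"
proof -
  have zsym: "\<forall>k<N. z k = cnj (z ((N - k) mod N))"
    using zh unfolding hatR_def by blast
  have "z 0 = cnj (z 0)" using zsym[rule_format, of 0] N0 by simp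
  then have z0_real: "Im (z 0) = 0" by (metis Reals_cnj_iff complex_is_Real_iff)
  show sym: "conj_symmetric N w"
    unfolding conj_symmetric_def
  proof (intro allI impI)
    fix k assume k: "k < N"
    show "w k = cnj (w ((N - k) mod N))"
    proof (cases "k = 0")
      case True
      then show ?thesis using \<open>z 0 = cnj (z 0)\<close> unfolding w_def by simp
    next
      case False
      moreover have "(N - k) mod N = N - k" "N - k \<noteq> 0" using k False by auto
      moreover have "z k = cnj (z ((N - k) mod N))" using zsym k by blast
      ultimately show ?thesis unfolding w_def by simp
    qed
  qed
  define Q where "Q = (\<Sum>j<N. Re (dft N w j) ^ 4 / 4 - Re (dft N w j) ^ 3)"
  define V where "V = (\<Sum>k\<in>{1..N-1}. nu \<gamma> N k * (cmod (z k))\<^sup>2)"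
  have "dft N (\<lambda>k. if k = 0 then 1 else 0) j = 1" for j
    using N0 by (simp add: dft_def if_distrib[of "\<lambda>x. _ * x"] cong: if_cong)
  then have x_eq: "xvec N z = (\<lambda>j. Re (dft N w j) - 1)"
    unfolding xvec_def w_def dft_def by (simp add: distrib_left sum.distrib)
  have centre: "(1 + \<gamma> * (sin (real 0 * pi / real N))\<^sup>2) * (cmod (w 0))\<^sup>2 = (Re (z 0) + 1)\<^sup>2"
    unfolding w_def using z0_real by (simp add: cmod_power2)
  have modes: "(\<Sum>k\<in>{1..N-1}. (1 + \<gamma> * (sin (real k * pi / real N))\<^sup>2) * (cmod (w k))\<^sup>2) = V / 2"
    unfolding V_def sum_divide_distrib
    by (intro sum.cong refl) (auto simp: w_def nu_def lam_def algebra_simps)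
  have hessian: "hessian_form \<gamma> N w = (Re (z 0) + 1)\<^sup>2 + V / 2"
    unfolding hessian_form_def sum_lessThan_split_zero[OF N0] centre modes ..
  have "Rrem \<gamma> N z = (Q + real N * (hessian_form \<gamma> N w - 1/4)) / real N + 1/4
      - (Re (z 0) + 1)\<^sup>2 - (1/2) * V"
    unfolding Rrem_def Gtilde_def G_N_def x_eq F_gN_fourier[OF N0 sym] Q_def V_def ..
  also have "\<dots> = Q / real N"
    unfolding hessian using N0 by (simp add: field_simps)
  finally show "Rrem \<gamma> N z = Q / real N" .
qed

section \<open>Spectral bounds\<close>

lemma sin_ge_half:
  assumes "0 \<le> x" "x \<le> pi / 2" shows "x / 2 \<le> sin x"
proof -
  have "\<bar>sin x - (\<Sum>m<3. sin_coeff m * x ^ m)\<bar> \<le> inverse (fact 3) * \<bar>x\<bar> ^ 3"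
    by (rule Maclaurin_sin_bound)
  moreover have "(\<Sum>m<3. sin_coeff m * x ^ m) = x"
    by (simp add: numeral_3_eq_3 sin_coeff_Suc cos_coeff_def)
  ultimately have "\<bar>sin x - x\<bar> \<le> x ^ 3 / 6" using assms by (simp add: fact_numeral)
  then have "x - x ^ 3 / 6 \<le> sin x" by linarith
  moreover have "x\<^sup>2 \<le> 3"
  proof -
    have "x \<le> 1.6" using assms pi_approx by simp
    then have "x\<^sup>2 \<le> 1.6\<^sup>2" using assms by (intro power_mono) auto
    then show ?thesis by (simp add: power2_eq_square)
  qed
  ultimately show ?thesis
    using assms mult_left_mono[of "x\<^sup>2" 3 x] by (simp add: power2_eq_square power3_eq_cube)
qed

lemma nu_lower_bound:
  fixes N k :: nat and \<mu> :: real
  assumes "N \<ge> 3" "\<mu> \<ge> 1" "1 \<le> k" "k \<le> N - 1"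
  shows "real (min k (N - k)) ^ 2 / 4 \<le> nu (\<mu> * gamma1 N) N k"
proof -
  define d where "d = min k (N - k)"
  define s1 where "s1 = sin (pi / real N)"
  define sk where "sk = sin (real k * pi / real N)"
  have N0: "real N > 0" using assms by simp
  have d_bounds: "1 \<le> d" "2 * d \<le> N" using assms unfolding d_def by auto
  have s1_pos: "s1 > 0" unfolding s1_def using assms by (intro sin_gt_zero) (auto simp: field_simps)
  have s1_le: "s1 \<le> pi / real N" unfolding s1_def using abs_sin_x_le_abs_x[of "pi / real N"] N0 by simp
  have sk_d: "sk = sin (real d * pi / real N)"
  proof (cases "k \<le> N - k")
    case False
    then have "real d * pi / real N = pi - real k * pi / real N"
      using assms N0 unfolding d_def by (simp add: field_simps)
    then show ?thesis unfolding sk_def by simp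
  qed (simp add: sk_def d_def)
  have angle: "0 \<le> real d * pi / real N" "real d * pi / real N \<le> pi / 2"
    using d_bounds N0 by (auto simp: field_simps)
  have sk_low: "real d * pi / real N / 2 \<le> sk" unfolding sk_d using sin_ge_half[OF angle] .
  have "nu (\<mu> * gamma1 N) N k = 2 + \<mu> * sk\<^sup>2 / s1\<^sup>2"
    unfolding nu_def lam_def gamma1_def sk_def[symmetric] s1_def[symmetric] using s1_pos by simp
  moreover have "real d ^ 2 / 4 \<le> sk\<^sup>2 / s1\<^sup>2"
  proof -
    have "(real d * pi / real N / 2)\<^sup>2 / (pi / real N)\<^sup>2 \<le> sk\<^sup>2 / s1\<^sup>2"
      using sk_low angle s1_le s1_pos by (intro frac_le power_mono) auto
    moreover have "(real d * pi / real N / 2)\<^sup>2 / (pi / real N)\<^sup>2 = real d ^ 2 / 4"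
      using N0 by (simp add: field_simps power2_eq_square)
    ultimately show ?thesis by metis
  qed
  moreover have "sk\<^sup>2 / s1\<^sup>2 \<le> \<mu> * sk\<^sup>2 / s1\<^sup>2"
    using assms(2) by (simp add: divide_right_mono mult_le_cancel_right1)
  ultimately show ?thesis unfolding d_def by linarith
qed

lemma box_width_bound:
  fixes N k :: nat and \<mu> \<alpha> :: real
  assumes "N \<ge> 3" "\<mu> \<ge> 1" "1 \<le> k" "k \<le> N - 1"
  shows "r_kN \<alpha> N k / sqrt (nu (\<mu> * gamma1 N) N k) \<le> 8 * real (min k (N - k)) powr (\<alpha> - 1)"
proof -
  define d where "d = real (min k (N - k))"
  have d1: "d \<ge> 1" unfolding d_def using assms by auto
  have "d / 2 = sqrt (d\<^sup>2 / 4)" using d1 by (simp add: real_sqrt_divide)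
  also have "\<dots> \<le> sqrt (nu (\<mu> * gamma1 N) N k)"
    using nu_lower_bound[OF assms] unfolding d_def by simp
  finally have sqrt_nu: "d / 2 \<le> sqrt (nu (\<mu> * gamma1 N) N k)" .
  moreover have "0 < sqrt (nu (\<mu> * gamma1 N) N k)" using sqrt_nu d1 by linarith
  ultimately have "r_kN \<alpha> N k / sqrt (nu (\<mu> * gamma1 N) N k) \<le> 4 * d powr \<alpha> / (d / 2)"
    unfolding r_kN_def rho_def d_def[symmetric] using d1 by (intro divide_left_mono) auto
  also have "\<dots> = 8 * d powr (\<alpha> - 1)" using d1 by (simp add: powr_diff)
  finally show ?thesis unfolding d_def .
qed

section \<open>Uniform p-norm bounds on the box\<close>

lemma summable_shifted_powr:
  fixes s :: real assumes "s > 1" shows "summable (\<lambda>n. real (Suc n) powr (- s))"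
  using summable_ignore_initial_segment[of "\<lambda>n. real n powr (- s)" 1] assms
  by (simp add: summable_real_powr_iff)

lemma sum_cyclic_distance_powr:
  fixes N :: nat and s :: real assumes "s > 1"
  shows "(\<Sum>k\<in>{1..N-1}. real (min k (N - k)) powr (- s)) \<le> 2 * (\<Sum>n. real (Suc n) powr (- s))"
proof -
  let ?f = "\<lambda>n::nat. real n powr (- s)"
  have "(\<Sum>k\<in>{1..N-1}. ?f k) = (\<Sum>n<N-1. real (Suc n) powr (- s))"
    by (rule sum.reindex_bij_witness[where j="\<lambda>k. k - 1" and i="Suc"]) auto
  also have "\<dots> \<le> (\<Sum>n. real (Suc n) powr (- s))"
    by (rule sum_le_suminf[OF summable_shifted_powr[OF assms]]) auto
  finally have partial: "(\<Sum>k\<in>{1..N-1}. ?f k) \<le> (\<Sum>n. real (Suc n) powr (- s))" .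
  have reflected: "(\<Sum>k\<in>{1..N-1}. ?f (N - k)) = (\<Sum>k\<in>{1..N-1}. ?f k)"
    by (rule sum.reindex_bij_witness[where i="\<lambda>k. N - k" and j="\<lambda>k. N - k"]) auto
  have "(\<Sum>k\<in>{1..N-1}. real (min k (N - k)) powr (- s)) \<le> (\<Sum>k\<in>{1..N-1}. ?f k + ?f (N - k))"
    by (intro sum_mono) (auto simp: min_def)
  also have "\<dots> = 2 * (\<Sum>k\<in>{1..N-1}. ?f k)" by (simp only: sum.distrib reflected mult_2)
  finally show ?thesis using partial by simp
qed

text \<open>The constant in the bound \<open>\<parallel>a\<parallel>\<^sub>p\<^sup>p \<le> C \<delta>\<^sup>p\<close> for vectors decaying like
  \<open>c \<delta> min k (N - k)\<^sup>\<alpha>\<^sup>-\<^sup>1\<close>.\<close>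
definition decay_const :: "real \<Rightarrow> real \<Rightarrow> real \<Rightarrow> real" where
  "decay_const c \<alpha> p = 1 + c powr p * (2 * (\<Sum>n. real (Suc n) powr (- (p * (1 - \<alpha>)))))"

lemma decay_const_nonneg:
  assumes "p * (1 - \<alpha>) > 1" shows "decay_const c \<alpha> p \<ge> 0"
  unfolding decay_const_def
  by (intro add_nonneg_nonneg mult_nonneg_nonneg suminf_nonneg summable_shifted_powr[OF assms]) auto

text \<open>Uniform-in-\<open>N\<close> bound on \<open>\<parallel>a\<parallel>\<^sub>p\<^sup>p\<close>: the zero mode contributes \<open>\<delta>\<^sup>p\<close>, the others a
  convergent zeta sum, since \<open>(min k (N - k))\<^sup>(\<^sup>\<alpha>\<^sup>-\<^sup>1\<^sup>)\<^sup>p\<close> is summable when \<open>p(1 - \<alpha>) > 1\<close>.\<close>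
lemma decaying_powr_sum:
  fixes a :: "nat \<Rightarrow> real" and N :: nat
  assumes "N > 0" "p > 0" "p * (1 - \<alpha>) > 1" "\<delta> > 0" "c \<ge> 0"
    and a_nonneg: "\<And>k. a k \<ge> 0" and a0: "a 0 \<le> \<delta>"
    and ak: "\<And>k. k \<in> {1..N-1} \<Longrightarrow> a k \<le> \<delta> * (c * real (min k (N - k)) powr (\<alpha> - 1))"
  shows "(\<Sum>k<N. a k powr p) \<le> \<delta> powr p * decay_const c \<alpha> p"
proof -
  let ?s = "p * (1 - \<alpha>)"
  have term_k: "a k powr p \<le> \<delta> powr p * c powr p * real (min k (N - k)) powr (- ?s)"
    if k: "k \<in> {1..N-1}" for k
  proof -
    have "a k powr p \<le> (\<delta> * (c * real (min k (N - k)) powr (\<alpha> - 1))) powr p"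
      using ak[OF k] a_nonneg assms(2) by (intro powr_mono2) auto
    also have "\<dots> = \<delta> powr p * c powr p * real (min k (N - k)) powr (- ?s)"
      using assms(4,5) by (simp add: powr_mult powr_powr algebra_simps)
    finally show ?thesis .
  qed
  have "(\<Sum>k<N. a k powr p) \<le> \<delta> powr p
      + (\<Sum>k\<in>{1..N-1}. \<delta> powr p * c powr p * real (min k (N - k)) powr (- ?s))"
    unfolding sum_lessThan_split_zero[OF assms(1)]
    using term_k a0 a_nonneg assms(2) by (intro add_mono sum_mono powr_mono2) auto
  also have "\<dots> \<le> \<delta> powr p + \<delta> powr p * c powr p * (2 * (\<Sum>n. real (Suc n) powr (- ?s)))"
    using sum_cyclic_distance_powr[OF assms(3), of N]
    by (simp add: sum_distrib_left[symmetric] mult_left_mono)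
  finally show ?thesis by (simp add: decay_const_def algebra_simps)
qed

lemma C_delta_decay:
  assumes "N \<ge> 3" "\<mu> \<ge> 1" "\<delta> > 0" "z \<in> C_delta (\<mu> * gamma1 N) \<alpha> N \<delta>"
  shows "cmod (z 0 + 1) \<le> \<delta>"
    and "\<And>k. k \<in> {1..N-1} \<Longrightarrow> cmod (z k) \<le> \<delta> * (8 * real (min k (N - k)) powr (\<alpha> - 1))"
proof -
  have "cmod (z 0 + 1) \<le> \<delta> / sqrt 2" using assms(4) unfolding C_delta_def by auto
  moreover have "\<delta> / sqrt 2 \<le> \<delta>" using assms(3) by (simp add: divide_le_eq)
  ultimately show "cmod (z 0 + 1) \<le> \<delta>" by simp
  fix k assume k: "k \<in> {1..N-1}"
  have "cmod (z k) \<le> \<delta> * (r_kN \<alpha> N k / sqrt (nu (\<mu> * gamma1 N) N k))"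
    using assms(4) k unfolding C_delta_def by auto
  also have "\<dots> \<le> \<delta> * (8 * real (min k (N - k)) powr (\<alpha> - 1))"
    using box_width_bound[OF assms(1,2), of k \<alpha>] k assms(3) by (intro mult_left_mono) auto
  finally show "cmod (z k) \<le> \<delta> * (8 * real (min k (N - k)) powr (\<alpha> - 1))" .
qed

section \<open>The cubic estimate\<close>

text \<open>Absorbing the cubic term: \<open>|y|\<^sup>3 \<le> (\<delta> y\<^sup>2 + y\<^sup>4/\<delta>)/2\<close> by AM-GM.\<close>
lemma quartic_minus_cubic_bound:
  fixes y :: "nat \<Rightarrow> real" assumes "\<delta> > 0"
  shows "\<bar>\<Sum>j<N. y j ^ 4 / 4 - y j ^ 3\<bar>
    \<le> (1/4 + 1 / (2 * \<delta>)) * (\<Sum>j<N. y j ^ 4) + \<delta> / 2 * (\<Sum>j<N. (y j)\<^sup>2)"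
proof -
  have amgm: "\<bar>t\<bar> ^ 3 \<le> (\<delta> * t\<^sup>2 + t ^ 4 / \<delta>) / 2" for t :: real
  proof -
    have "0 \<le> (\<bar>t\<bar> * (\<delta> - \<bar>t\<bar>))\<^sup>2" by simp
    then have "\<delta> * (2 * \<bar>t\<bar> ^ 3) \<le> \<delta> * (\<delta> * t\<^sup>2 + t ^ 4 / \<delta>)"
      using assms by (simp add: power2_eq_square power3_eq_cube power4_eq_xxxx algebra_simps)
    then show ?thesis using assms by simp
  qed
  have "\<bar>\<Sum>j<N. y j ^ 4 / 4 - y j ^ 3\<bar> \<le> (\<Sum>j<N. y j ^ 4 / 4 + \<bar>y j\<bar> ^ 3)"
  proof (rule order_trans[OF sum_abs sum_mono])
    fix j
    have "\<bar>y j ^ 4 / 4\<bar> = y j ^ 4 / 4" by simp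
    then show "\<bar>y j ^ 4 / 4 - y j ^ 3\<bar> \<le> y j ^ 4 / 4 + \<bar>y j\<bar> ^ 3"
      using abs_triangle_ineq4[of "y j ^ 4 / 4" "y j ^ 3"] by (simp add: power_abs)
  qed
  also have "\<dots> \<le> (\<Sum>j<N. (1/4 + 1 / (2 * \<delta>)) * y j ^ 4 + \<delta> / 2 * (y j)\<^sup>2)"
  proof (rule sum_mono)
    fix j
    have "(1/4 + 1 / (2 * \<delta>)) * y j ^ 4 + \<delta> / 2 * (y j)\<^sup>2
        = y j ^ 4 / 4 + (\<delta> * (y j)\<^sup>2 + y j ^ 4 / \<delta>) / 2"
      using assms by (simp add: field_simps)
    then show "y j ^ 4 / 4 + \<bar>y j\<bar> ^ 3 \<le> (1/4 + 1 / (2 * \<delta>)) * y j ^ 4 + \<delta> / 2 * (y j)\<^sup>2"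
      using amgm[of "y j"] by linarith
  qed
  finally show ?thesis by (simp add: sum.distrib sum_distrib_left)
qed

text \<open>On \<open>C\<^sub>\<delta>(I\<^sub>-)\<close> the centred vector \<open>w = z + e\<^sub>0\<close> has \<open>\<parallel>w * w\<parallel>\<^sub>2\<^sup>2 = O(\<delta>\<^sup>4)\<close> (via its
  \<open>4/3\<close>-norm, which needs \<open>\<alpha> < 1/4\<close>) and \<open>\<parallel>w\<parallel>\<^sub>2\<^sup>2 = O(\<delta>\<^sup>2)\<close>, uniformly in \<open>N\<close>.\<close>
lemma centred_norm_bounds:
  fixes \<mu> \<alpha> \<delta> :: real and N :: nat
  assumes "\<mu> \<ge> 1" "\<alpha> < 1/4" "N \<ge> 3" "0 < \<delta>" and zC: "z \<in> C_delta (\<mu> * gamma1 N) \<alpha> N \<delta>"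
  defines "w \<equiv> \<lambda>k. z k + (if k = 0 then 1 else 0)"
  shows "(\<Sum>m<N. (cmod (autoconv N w m))\<^sup>2) \<le> \<delta> ^ 4 * (decay_const 8 \<alpha> (4/3)) ^ 3"
    and "(\<Sum>k<N. (cmod (w k))\<^sup>2) \<le> \<delta>\<^sup>2 * decay_const 8 \<alpha> 2"
proof -
  have N0: "N > 0" using assms(3) by simp
  have w0: "cmod (w 0) \<le> \<delta>" using C_delta_decay(1)[OF assms(3,1,4) zC] by (simp add: w_def)
  have wk: "cmod (w k) \<le> \<delta> * (8 * real (min k (N - k)) powr (\<alpha> - 1))"
    if "k \<in> {1..N-1}" for k
    using C_delta_decay(2)[OF assms(3,1,4) zC that] that by (simp add: w_def)
  have "(\<Sum>k<N. cmod (w k) powr (4/3)) \<le> \<delta> powr (4/3) * decay_const 8 \<alpha> (4/3)"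
    using assms N0 w0 wk by (intro decaying_powr_sum) auto
  then have "(\<Sum>k<N. cmod (w k) powr (4/3)) ^ 3 \<le> (\<delta> powr (4/3) * decay_const 8 \<alpha> (4/3)) ^ 3"
    by (intro power_mono) (auto simp: sum_nonneg)
  also have "\<dots> = \<delta> ^ 4 * (decay_const 8 \<alpha> (4/3)) ^ 3"
    using assms(4) by (simp add: power_mult_distrib powr_power)
  finally show "(\<Sum>m<N. (cmod (autoconv N w m))\<^sup>2) \<le> \<delta> ^ 4 * (decay_const 8 \<alpha> (4/3)) ^ 3"
    using autoconv_norm_bound[of N w] by linarith
  show "(\<Sum>k<N. (cmod (w k))\<^sup>2) \<le> \<delta>\<^sup>2 * decay_const 8 \<alpha> 2"
    using decaying_powr_sum[of N 2 \<alpha> \<delta> 8 "\<lambda>k. cmod (w k)"] assms N0 w0 wk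
    by (simp add: mult.commute)
qed

lemma remainder_bound:
  fixes \<mu> \<alpha> \<delta> :: real and N :: nat
  assumes "\<mu> \<ge> 1" "\<alpha> < 1/4" "N \<ge> 3" "0 < \<delta>" "\<delta> < 1"
    and zC: "z \<in> C_delta (\<mu> * gamma1 N) \<alpha> N \<delta>"
  shows "\<bar>Rrem (\<mu> * gamma1 N) N z\<bar>
    \<le> ((decay_const 8 \<alpha> (4/3)) ^ 3 + decay_const 8 \<alpha> 2) * \<delta> ^ 3"
proof -
  define w where "w = (\<lambda>k. z k + (if k = 0 then 1 else 0))"
  define K4 where "K4 = decay_const 8 \<alpha> (4/3)"
  define K2 where "K2 = decay_const 8 \<alpha> 2"
  have N0: "N > 0" using assms(3) by simp
  have zh: "z \<in> hatR N" using zC unfolding C_delta_def by simp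
  have sym: "conj_symmetric N w" unfolding w_def by (rule Rrem_fourier(1)[OF N0 zh])
  have L4: "(\<Sum>m<N. (cmod (autoconv N w m))\<^sup>2) \<le> \<delta> ^ 4 * K4 ^ 3"
    using centred_norm_bounds(1)[OF assms(1-4) zC] unfolding w_def K4_def .
  have L2: "(\<Sum>k<N. (cmod (w k))\<^sup>2) \<le> \<delta>\<^sup>2 * K2"
    using centred_norm_bounds(2)[OF assms(1-4) zC] unfolding w_def K2_def .
  have K_nonneg: "K4 \<ge> 0" "K2 \<ge> 0"
    unfolding K4_def K2_def using assms(2) by (auto intro!: decay_const_nonneg)
  have "\<bar>Rrem (\<mu> * gamma1 N) N z\<bar> \<le> (1/4 + 1 / (2 * \<delta>)) * (\<Sum>m<N. (cmod (autoconv N w m))\<^sup>2)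
      + \<delta> / 2 * (\<Sum>k<N. (cmod (w k))\<^sup>2)"
    using quartic_minus_cubic_bound[OF assms(4), of "\<lambda>j. Re (dft N w j)" N] N0
    unfolding Rrem_fourier(2)[OF N0 zh, folded w_def] real_dft_moments[OF N0 sym]
    by (simp add: divide_le_eq algebra_simps)
  also have "\<dots> \<le> (1/4 + 1 / (2 * \<delta>)) * (\<delta> ^ 4 * K4 ^ 3) + \<delta> / 2 * (\<delta>\<^sup>2 * K2)"
    using L4 L2 assms(4) by (intro add_mono mult_left_mono) auto
  also have "\<dots> = (\<delta> / 4 + 1/2) * \<delta> ^ 3 * K4 ^ 3 + 1/2 * \<delta> ^ 3 * K2"
    using assms(4) by (simp add: field_simps power_eq_if)
  also have "\<dots> \<le> 1 * \<delta> ^ 3 * K4 ^ 3 + 1 * \<delta> ^ 3 * K2"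
    using assms(4,5) K_nonneg by (intro add_mono mult_right_mono) auto
  finally show ?thesis unfolding K4_def K2_def by (simp add: algebra_simps)
qed

theorem lemma4p11:
  fixes \<mu> \<alpha> :: real
  assumes "\<mu> > 1" and "0 < \<alpha>" and "\<alpha> < 1/4"
  shows "\<exists>A9 \<delta>0. \<delta>0 > 0 \<and>
    (\<forall>N::nat. N \<ge> 3 \<longrightarrow> (\<forall>\<delta>. 0 < \<delta> \<and> \<delta> < \<delta>0 \<longrightarrow>
      (\<forall>z \<in> C_delta (\<mu> * gamma1 N) \<alpha> N \<delta>.
         \<bar>Rrem (\<mu> * gamma1 N) N z\<bar> \<le> A9 * \<delta> ^ 3)))"
proof (intro exI conjI)
  show "(1::real) > 0" by simp
  show "\<forall>N::nat. N \<ge> 3 \<longrightarrow> (\<forall>\<delta>. 0 < \<delta> \<and> \<delta> < 1 \<longrightarrow>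
      (\<forall>z \<in> C_delta (\<mu> * gamma1 N) \<alpha> N \<delta>. \<bar>Rrem (\<mu> * gamma1 N) N z\<bar>
        \<le> ((decay_const 8 \<alpha> (4/3)) ^ 3 + decay_const 8 \<alpha> 2) * \<delta> ^ 3))"
    using remainder_bound[of \<mu> \<alpha>] assms(1,3) by auto
qed

end
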